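(* Let $\alpha\ge2$, $\varepsilon\ge0$, $\ell,t\ge1$ and $1\le h\le\alpha\ell+\varepsilon$ be integers, and $q$ a prime power. Let $\gamma=3.48$, $\beta=\big(\frac{(\alpha-1)!}{2e\gamma\alpha}\big)^{1/(\alpha-1)}$ and $f(t)=(\alpha\ell+\varepsilon-h)\varepsilon t^2+(\alpha\ell+2\varepsilon-h)t+1$. If $r\le\beta\,q^{f(t)/(\alpha-1)}$, then the $(\varepsilon,\ell)$-$\mathcal N_{h,r,\alpha\ell+\varepsilon}$ network has a $(q,t)$-linear solution, i.e., there exist matrices $\boldsymbol A_1,\dots,\boldsymbol A_r\in\mathbb F_q^{\ell t\times ht}$ such that for every $1\le i_1<\dots<i_\alpha\le r$ the stacked matrix $\begin{pmatrix}\boldsymbol A_{i_1}\\ \vdots\\ \boldsymbol A_{i_\alpha}\end{pmatrix}$ has rank at least $(h-\varepsilon)t$.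
   Context: The generalized combination network $(\varepsilon,\ell)$-$\mathcal N_{h,r,\alpha\ell+\varepsilon}$ has a source with $h$ messages, $r$ middle nodes each connected to the source by $\ell$ parallel links, and one receiver for each $\alpha$-subset of middle nodes, connected to each of those $\alpha$ nodes by $\ell$ links and to the source by $\varepsilon$ direct links. A $(q,t)$-linear solution (messages in $\mathbb F_q^t$) exists if and only if there are coding matrices $\boldsymbol A_1,\dots,\boldsymbol A_r\in\mathbb F_q^{\ell t\times ht}$ for the middle nodes such that every $\alpha$ of them stacked have rank at least $(h-\varepsilon)t$ (the direct links then supply the remaining information). $e$ is Euler's number. *)

theory Defs
  imports "HOL-Analysis.Analysis" "Jordan_Normal_Form.DL_Rank"
begin

definition stack_mat :: "nat \<Rightarrow> nat \<Rightarrow> (nat \<Rightarrow> 'a mat) \<Rightarrow> nat list \<Rightarrow> 'a mat" where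
  "stack_mat m n A is = mat (length is * m) n (\<lambda>(i, j). A (is ! (i div m)) $$ (i mod m, j))"

definition mat_rank :: "'a::field mat \<Rightarrow> nat" where
  "mat_rank M = vec_space.rank (dim_row M) M"

end

(* Random coding with alteration.  An m x n matrix of rank at most s is determined by a code that
   lists its columns from left to right, each one either a new pivot column or the coefficients of
   a combination of the pivots met so far; counting codes shows that there are at most
   (32/7) q^(m s + s (n - s)) such matrices.  Choose R = r + d coding matrices, d = ceil (r / alpha).
   With s = (h - eps) t - 1, m = alpha l t and n = h t, a fixed alpha-subset is deficient (stacked
   rank at most s) for at most a fraction (32/7) q^(-f(t)) of all choices, since m n = m s + s (n - s)
   + f(t).  Hence some choice has at most (R choose alpha) (32/7) q^(-f(t)) <= d deficient subsets,
   the last inequality being the hypothesis on r.  Deleting the least index of every deficient subset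
   leaves r indices on which all alpha-subsets have full rank. *)

theory Submission
  imports Defs
begin

datatype 'a col_code = Pivot "'a list" | Combination "'a list"

text \<open>\<^term>\<open>col_codes m p n \<rho>\<close> contains the codes of \<open>n\<close> columns of height \<open>m\<close> with \<open>\<rho>\<close>
  pivots among them, when \<open>p\<close> pivots precede them; a combination is given by one coefficient per
  preceding pivot.\<close>

fun col_codes :: "nat \<Rightarrow> nat \<Rightarrow> nat \<Rightarrow> nat \<Rightarrow> 'a col_code list set" where
  "col_codes m p 0 \<rho> = (if \<rho> = 0 then {[]} else {})"
| "col_codes m p (Suc n) 0 = (\<lambda>(c, ds). Combination c # ds) ` ({c. length c = p} \<times> col_codes m p n 0)"
| "col_codes m p (Suc n) (Suc \<rho>) =
     (\<lambda>(v, ds). Pivot v # ds) ` ({v. length v = m} \<times> col_codes m (Suc p) n \<rho>)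
     \<union> (\<lambda>(c, ds). Combination c # ds) ` ({c. length c = p} \<times> col_codes m p n (Suc \<rho>))"

lemma finite_lists_length: "finite {v :: 'a::finite list. length v = m}"
  using finite_lists_length_eq[of "UNIV :: 'a set" m] by simp

lemma card_lists_length: "card {v :: 'a::finite list. length v = m} = CARD('a) ^ m"
  using card_lists_length_eq[of "UNIV :: 'a set" m] by simp

lemma finite_col_codes: "finite (col_codes m p n \<rho> :: 'a::finite col_code list set)"
  by (induction m p n \<rho> rule: col_codes.induct) (simp_all add: finite_lists_length)

lemma col_codes_empty: "n < \<rho> \<Longrightarrow> col_codes m p n \<rho> = {}"
  by (induction m p n \<rho> rule: col_codes.induct) auto

lemma card_col_codes_Suc_le:
  "real (card (col_codes m p (Suc n) \<rho> :: 'a::finite col_code list set))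
     \<le> (if \<rho> = 0 then 0 else real CARD('a) ^ m * card (col_codes m (Suc p) n (\<rho> - 1) :: 'a col_code list set))
       + real CARD('a) ^ p * card (col_codes m p n \<rho> :: 'a col_code list set)"
proof -
  let ?P = "{v :: 'a list. length v = m} \<times> (col_codes m (Suc p) n (\<rho> - 1) :: 'a col_code list set)"
  let ?C = "{c :: 'a list. length c = p} \<times> (col_codes m p n \<rho> :: 'a col_code list set)"
  have fin: "finite ?P" "finite ?C"
    by (intro finite_cartesian_product finite_lists_length finite_col_codes)+
  have "card (col_codes m p (Suc n) \<rho> :: 'a col_code list set) \<le> (if \<rho> = 0 then 0 else card ?P) + card ?C"
  proof (cases \<rho>)
    case 0
    then show ?thesis using card_image_le[OF fin(2)] by simp
  next
    case (Suc \<sigma>)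
    then have "card (col_codes m p (Suc n) \<rho> :: 'a col_code list set)
        \<le> card ((\<lambda>(v, ds). Pivot v # ds) ` ?P) + card ((\<lambda>(c, ds). Combination c # ds) ` ?C)"
      by (simp add: card_Un_le)
    also have "\<dots> \<le> card ?P + card ?C"
      by (rule add_mono[OF card_image_le[OF fin(1)] card_image_le[OF fin(2)]])
    finally show ?thesis using Suc by simp
  qed
  then have "real (card (col_codes m p (Suc n) \<rho> :: 'a col_code list set))
      \<le> real ((if \<rho> = 0 then 0 else card ?P) + card ?C)"
    by (rule of_nat_mono)
  then show ?thesis
    by (cases "\<rho> = 0") (simp_all add: card_cartesian_product card_lists_length del: col_codes.simps)
qed

text \<open>\<open>qpoch_inv Q \<rho> = \<Prod>i=1..\<rho>. 1 / (1 - Q^-i)\<close>.  For \<open>Q = 2\<close> its limit 3.46... is the source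
  of the paper's constant 3.48; the cruder bound 4 suffices here.\<close>

fun qpoch_inv :: "real \<Rightarrow> nat \<Rightarrow> real" where
  "qpoch_inv Q 0 = 1"
| "qpoch_inv Q (Suc \<rho>) = qpoch_inv Q \<rho> / (1 - 1 / Q ^ Suc \<rho>)"

lemma qpoch_inv_pos: "Q > 1 \<Longrightarrow> qpoch_inv Q \<rho> > 0"
proof (induction \<rho>)
  case (Suc \<rho>)
  have "1 / Q ^ Suc \<rho> < 1"
    using Suc.prems one_less_power[of Q "Suc \<rho>"] by simp
  then show ?case using Suc by simp
qed simp

lemma qpoch_inv_Suc_eq:
  assumes "Q > 1"
  shows "qpoch_inv Q \<rho> * Q ^ Suc \<rho> + qpoch_inv Q (Suc \<rho>) = qpoch_inv Q (Suc \<rho>) * Q ^ Suc \<rho>"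
proof -
  have "Q ^ Suc \<rho> > 1" using assms one_less_power by blast
  then show ?thesis using assms by (simp add: field_simps)
qed

definition col_code_bound :: "real \<Rightarrow> nat \<Rightarrow> nat \<Rightarrow> nat \<Rightarrow> nat \<Rightarrow> real" where
  "col_code_bound Q m p n \<rho> = qpoch_inv Q \<rho> * Q ^ (m * \<rho> + \<rho> * (n - \<rho>) + p * (n - \<rho>))"

lemma col_code_bound_Suc_0: "col_code_bound Q m p (Suc n) 0 = Q ^ p * col_code_bound Q m p n 0"
  by (simp add: col_code_bound_def power_add)

lemma col_code_bound_Suc_Suc:
  assumes Q: "Q > 1" and "Suc \<sigma> \<le> n"
  shows "col_code_bound Q m p (Suc n) (Suc \<sigma>)
    = Q ^ m * col_code_bound Q m (Suc p) n \<sigma> + Q ^ p * col_code_bound Q m p n (Suc \<sigma>)"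
proof -
  obtain d where n: "n = Suc \<sigma> + d" using assms(2) le_Suc_ex by blast
  define c where "c = p + m * Suc \<sigma> + Suc \<sigma> * d + p * d"
  have "col_code_bound Q m p (Suc n) (Suc \<sigma>) = qpoch_inv Q (Suc \<sigma>) * Q ^ (Suc \<sigma> + c)"
    unfolding col_code_bound_def c_def n by (simp add: algebra_simps)
  moreover have "Q ^ m * col_code_bound Q m (Suc p) n \<sigma> = qpoch_inv Q \<sigma> * Q ^ (Suc \<sigma> + c)"
  proof -
    have "m + (m * \<sigma> + \<sigma> * (n - \<sigma>) + Suc p * (n - \<sigma>)) = Suc \<sigma> + c"
      unfolding c_def n by (simp add: algebra_simps)
    then show ?thesis unfolding col_code_bound_def by (metis mult.left_commute power_add)
  qed
  moreover have "Q ^ p * col_code_bound Q m p n (Suc \<sigma>) = qpoch_inv Q (Suc \<sigma>) * Q ^ c"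
  proof -
    have "p + (m * Suc \<sigma> + Suc \<sigma> * (n - Suc \<sigma>) + p * (n - Suc \<sigma>)) = c"
      unfolding c_def n by (simp add: algebra_simps)
    then show ?thesis unfolding col_code_bound_def by (metis mult.left_commute power_add)
  qed
  moreover have "qpoch_inv Q \<sigma> * Q ^ (Suc \<sigma> + c) + qpoch_inv Q (Suc \<sigma>) * Q ^ c
      = (qpoch_inv Q \<sigma> * Q ^ Suc \<sigma> + qpoch_inv Q (Suc \<sigma>)) * Q ^ c"
    by (simp only: power_add distrib_right mult.assoc)
  ultimately show ?thesis
    unfolding qpoch_inv_Suc_eq[OF Q] by (simp only: power_add mult.assoc)
qed

lemma col_code_bound_diag:
  assumes "Q > 1"
  shows "Q ^ m * col_code_bound Q m (Suc p) n n \<le> col_code_bound Q m p (Suc n) (Suc n)"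
proof -
  have "0 < 1 - 1 / Q ^ Suc n" "1 - 1 / Q ^ Suc n \<le> 1"
    using one_less_power[OF assms, of "Suc n"] by simp_all
  then have "qpoch_inv Q n \<le> qpoch_inv Q (Suc n)"
    using qpoch_inv_pos[OF assms, of n] by (simp add: le_divide_eq mult_left_le)
  then have "Q ^ m * (qpoch_inv Q n * Q ^ (m * n)) \<le> Q ^ m * (qpoch_inv Q (Suc n) * Q ^ (m * n))"
    using assms by (intro mult_left_mono mult_right_mono) simp_all
  then show ?thesis
    unfolding col_code_bound_def by (simp add: power_add mult_ac del: qpoch_inv.simps)
qed

lemma card_col_codes_le:
  assumes "CARD('a::finite) \<ge> 2" and "\<rho> \<le> n"
  shows "real (card (col_codes m p n \<rho> :: 'a col_code list set)) \<le> col_code_bound CARD('a) m p n \<rho>"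
  using assms(2)
proof (induction n arbitrary: p \<rho>)
  case 0
  then show ?case by (simp add: col_code_bound_def)
next
  case (Suc n)
  define Q where "Q = real CARD('a)"
  have Q1: "Q > 1" using assms(1) unfolding Q_def by simp
  show ?case
  proof (cases \<rho>)
    case 0
    have "real (card (col_codes m p (Suc n) 0 :: 'a col_code list set))
        \<le> Q ^ p * card (col_codes m p n 0 :: 'a col_code list set)"
      using card_col_codes_Suc_le[where 'a = 'a, of m p n 0] unfolding Q_def by simp
    also have "\<dots> \<le> Q ^ p * col_code_bound Q m p n 0"
      using Suc.IH[of 0 p] Q1 unfolding Q_def by (intro mult_left_mono) simp_all
    finally show ?thesis unfolding 0 col_code_bound_Suc_0 Q_def .
  next
    case (Suc \<sigma>)
    have piv: "Q ^ m * card (col_codes m (Suc p) n \<sigma> :: 'a col_code list set) \<le> Q ^ m * col_code_bound Q m (Suc p) n \<sigma>"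
      using Suc.IH[of \<sigma> "Suc p"] Suc \<open>\<rho> \<le> Suc n\<close> Q1 unfolding Q_def by (intro mult_left_mono) simp_all
    have "real (card (col_codes m p (Suc n) \<rho> :: 'a col_code list set))
        \<le> Q ^ m * card (col_codes m (Suc p) n \<sigma> :: 'a col_code list set)
          + Q ^ p * card (col_codes m p n \<rho> :: 'a col_code list set)"
      using card_col_codes_Suc_le[of m p n \<rho>] Suc unfolding Q_def by simp
    also have "\<dots> \<le> col_code_bound Q m p (Suc n) \<rho>"
    proof (cases "\<rho> \<le> n")
      case True
      have "Q ^ p * card (col_codes m p n \<rho> :: 'a col_code list set) \<le> Q ^ p * col_code_bound Q m p n \<rho>"
        using Suc.IH[OF True, of p] Q1 unfolding Q_def by (intro mult_left_mono) simp_all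
      then show ?thesis using piv col_code_bound_Suc_Suc[OF Q1 True[unfolded Suc]] Suc by simp
    next
      case False
      then have "\<sigma> = n" using Suc \<open>\<rho> \<le> Suc n\<close> by simp
      then show ?thesis using piv col_code_bound_diag[OF Q1, of m p n] False Suc by (simp add: col_codes_empty)
    qed
    finally show ?thesis unfolding Q_def .
  qed
qed

text \<open>A strengthening of \<open>qpoch_inv Q \<rho> \<le> 4\<close> that survives the induction.\<close>

lemma qpoch_inv_invariant:
  assumes q2: "Q \<ge> 2"
  shows "qpoch_inv Q (Suc r) * (1/4 + 1 / (2 * Q ^ Suc r)) \<le> 1"
proof (induction r)
  case 0
  have "1/4 + 1 / (2 * Q) \<le> 1 - 1 / Q" and "0 < 1 - 1 / Q" using q2 by (simp_all add: field_simps)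
  then show ?case by (simp add: field_simps)
next
  case (Suc r)
  define x where "x = 1 / Q ^ Suc r"
  define y where "y = 1 / Q"
  have x: "0 \<le> x" "x \<le> 1/2"
  proof -
    have "2 \<le> Q ^ Suc r" using q2 self_le_power[of Q "Suc r"] by linarith
    then show "0 \<le> x" "x \<le> 1/2" unfolding x_def by (simp_all add: field_simps)
  qed
  have y: "0 \<le> y" "y \<le> 1/2" unfolding y_def using q2 by (simp_all add: field_simps)
  have xy: "x * y \<le> 1/4" using mult_mono[OF x(2) y(2)] x y by simp
  have step: "1/4 + x * y / 2 \<le> (1/4 + x / 2) * (1 - x * y)"
  proof -
    have "0 \<le> x * (1/2 - 3 * y / 4 - x * y / 2)" using x y xy by (intro mult_nonneg_nonneg) auto
    moreover have "(1/4 + x / 2) * (1 - x * y) - (1/4 + x * y / 2) = x * (1/2 - 3 * y / 4 - x * y / 2)"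
      by (simp add: field_simps)
    ultimately show ?thesis by linarith
  qed
  have Qxy: "1 / Q ^ Suc (Suc r) = x * y" unfolding x_def y_def by simp
  have K: "qpoch_inv Q (Suc (Suc r)) = qpoch_inv Q (Suc r) / (1 - x * y)"
    by (simp only: qpoch_inv.simps(2)[of Q "Suc r"] Qxy)
  have "qpoch_inv Q (Suc (Suc r)) * (1/4 + x * y / 2) = qpoch_inv Q (Suc r) * ((1/4 + x * y / 2) / (1 - x * y))"
    unfolding K by simp
  also have "\<dots> \<le> qpoch_inv Q (Suc r) * (1/4 + x / 2)"
    using step xy qpoch_inv_pos[of Q "Suc r"] q2
    by (intro mult_left_mono) (simp_all add: divide_le_eq del: qpoch_inv.simps)
  also have "\<dots> \<le> 1" using Suc.IH unfolding x_def by (simp add: field_simps del: qpoch_inv.simps)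
  finally show ?case unfolding Qxy[symmetric] by (simp add: field_simps del: qpoch_inv.simps)
qed

lemma qpoch_inv_le_4:
  assumes "Q \<ge> 2"
  shows "qpoch_inv Q r \<le> 4"
proof (cases r)
  case (Suc r')
  have "qpoch_inv Q r * (1/4) \<le> qpoch_inv Q r * (1/4 + 1 / (2 * Q ^ r))"
    using qpoch_inv_pos[of Q r] assms by (intro mult_left_mono) auto
  also have "\<dots> \<le> 1" using qpoch_inv_invariant[OF assms, of r'] Suc by simp
  finally show ?thesis by simp
qed simp

lemma sum_power_rank_exponent_le:
  fixes Q :: real
  assumes "Q \<ge> 2" and "s < m" and "s < n"
  shows "(\<Sum>\<rho>\<le>s. Q ^ (m * \<rho> + \<rho> * (n - \<rho>))) \<le> 8/7 * Q ^ (m * s + s * (n - s))"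
  using assms(2,3)
proof (induction s)
  case (Suc s)
  obtain a b where n: "n = s + 2 + a" and m: "m = s + 2 + b"
    using Suc.prems by (metis add_2_eq_Suc' le_add_diff_inverse Suc_leI)
  have e: "m * Suc s + Suc s * (n - Suc s) = (m * s + s * (n - s)) + 3 + (a + b)"
    unfolding n m by (simp add: algebra_simps)
  have "(8::real) \<le> Q ^ 3" using power_mono[OF assms(1), of 3] by simp
  also have "\<dots> \<le> Q ^ (3 + (a + b))" using assms(1) by (intro power_increasing) auto
  finally have "8 * Q ^ (m * s + s * (n - s)) \<le> Q ^ (3 + (a + b)) * Q ^ (m * s + s * (n - s))"
    using assms(1) by (intro mult_right_mono) auto
  also have "\<dots> = Q ^ (m * Suc s + Suc s * (n - Suc s))" unfolding e by (simp add: power_add)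
  finally show ?case using Suc by simp
qed simp

text \<open>The first argument is the dimension, so that the empty combination is the zero vector of the
  right length.\<close>

fun lincomb_coeffs :: "nat \<Rightarrow> 'a::comm_ring_1 list \<Rightarrow> 'a vec list \<Rightarrow> 'a vec" where
  "lincomb_coeffs m (c # cs) (v # vs) = c \<cdot>\<^sub>v v + lincomb_coeffs m cs vs"
| "lincomb_coeffs m _ _ = 0\<^sub>v m"

fun decode_cols :: "nat \<Rightarrow> 'a::comm_ring_1 vec list \<Rightarrow> 'a col_code list \<Rightarrow> 'a vec list" where
  "decode_cols m ps [] = []"
| "decode_cols m ps (Pivot v # ds) = vec_of_list v # decode_cols m (ps @ [vec_of_list v]) ds"
| "decode_cols m ps (Combination c # ds) = lincomb_coeffs m c ps # decode_cols m ps ds"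

context vec_space
begin

lemma lincomb_list_eq_lincomb_coeffs:
  "set ps \<subseteq> carrier_vec n \<Longrightarrow> lincomb_list f ps = lincomb_coeffs n (map f [0..<length ps]) ps"
proof (induction ps arbitrary: f)
  case (Cons p ps)
  have "map f [0..<length (p # ps)] = f 0 # map (f \<circ> Suc) [0..<length ps]"
    by (simp add: map_upt_Suc del: upt_Suc)
  then show ?case using Cons by simp
qed simp

lemma span_eq_lincomb_coeffs:
  assumes "set ps \<subseteq> carrier_vec n" and "x \<in> span (set ps)"
  obtains c where "length c = length ps" and "lincomb_coeffs n c ps = x"
proof -
  have "x \<in> span_list ps" using assms span_list_as_span by simp
  then obtain f where "x = lincomb_list f ps" by (auto elim: in_span_listE)
  then show ?thesis
    using that[of "map f [0..<length ps]"] lincomb_list_eq_lincomb_coeffs[OF assms(1)] by simp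
qed

lemma exists_col_code:
  assumes "set ps \<subseteq> carrier_vec n" "set xs \<subseteq> carrier_vec n" "distinct ps" "lin_indpt (set ps)"
  shows "\<exists>\<rho>. \<exists>ds \<in> col_codes n (length ps) (length xs) \<rho>. decode_cols n ps ds = xs
           \<and> (\<exists>U \<subseteq> set ps \<union> set xs. lin_indpt U \<and> card U = length ps + \<rho>)"
  using assms
proof (induction xs arbitrary: ps)
  case Nil
  then show ?case by (intro exI[of _ 0] bexI[of _ "[]"] exI[of _ "set ps"]) (auto simp: distinct_card)
next
  case (Cons x xs)
  have x: "x \<in> carrier_vec n" and xs: "set xs \<subseteq> carrier_vec n" using Cons.prems by auto
  show ?case
  proof (cases "x \<in> span (set ps)")
    case True
    obtain c where c: "length c = length ps" "lincomb_coeffs n c ps = x"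
      using span_eq_lincomb_coeffs[OF Cons.prems(1) True] .
    obtain \<rho> ds U where "ds \<in> col_codes n (length ps) (length xs) \<rho>" "decode_cols n ps ds = xs"
      "U \<subseteq> set ps \<union> set xs" "lin_indpt U" "card U = length ps + \<rho>"
      using Cons.IH[OF Cons.prems(1) xs Cons.prems(3,4)] by blast
    then show ?thesis using c
      by (intro exI[of _ \<rho>] bexI[of _ "Combination c # ds"] exI[of _ U]) (cases \<rho>; auto)+
  next
    case False
    have "x \<notin> set ps" using False in_own_span[OF Cons.prems(1)] by blast
    then have ps': "set (ps @ [x]) \<subseteq> carrier_vec n" "distinct (ps @ [x])" "lin_indpt (set (ps @ [x]))"
      using lin_dep_iff_in_span[OF Cons.prems(1,4) x] False Cons.prems by auto
    obtain \<rho> ds U where "ds \<in> col_codes n (Suc (length ps)) (length xs) \<rho>" "decode_cols n (ps @ [x]) ds = xs"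
      "U \<subseteq> set (ps @ [x]) \<union> set xs" "lin_indpt U" "card U = Suc (length ps) + \<rho>"
      using Cons.IH[OF ps'(1) xs ps'(2,3)] by auto
    then show ?thesis using x
      by (intro exI[of _ "Suc \<rho>"] bexI[of _ "Pivot (list_of_vec x) # ds"] exI[of _ U]) (auto simp: vec_list)
  qed
qed

end

lemma low_rank_mat_subset_decode:
  fixes s :: nat
  shows "{M :: 'a::field mat. M \<in> carrier_mat m n \<and> mat_rank M \<le> s}
    \<subseteq> (\<Union>\<rho>\<le>s. (\<lambda>ds. mat_of_cols m (decode_cols m [] ds)) ` col_codes m 0 n \<rho>)"
proof
  fix M :: "'a mat" assume "M \<in> {M. M \<in> carrier_mat m n \<and> mat_rank M \<le> s}"
  then have M: "M \<in> carrier_mat m n" and rk: "mat_rank M \<le> s" by auto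
  interpret vec_space "TYPE('a)" m .
  have "set (cols M) \<subseteq> carrier_vec m" using M cols_dim by (metis carrier_matD(1))
  moreover have "lin_indpt {}" unfolding lin_dep_def by auto
  ultimately obtain \<rho> ds U where ds: "ds \<in> col_codes m 0 n \<rho>" "decode_cols m [] ds = cols M"
    and U: "U \<subseteq> set (cols M)" "lin_indpt U" "card U = \<rho>"
    using exists_col_code[of "[]" "cols M"] M by auto
  have "\<rho> \<le> s"
    using rank_ge_card_indpt[OF M U(1,2)] rk U(3) M unfolding mat_rank_def by simp
  moreover have "mat_of_cols m (decode_cols m [] ds) = M"
    using ds(2) M by (metis carrier_matD(1) mat_of_cols_cols)
  ultimately show "M \<in> (\<Union>\<rho>\<le>s. (\<lambda>ds. mat_of_cols m (decode_cols m [] ds)) ` col_codes m 0 n \<rho>)"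
    using ds(1) by blast
qed

lemma card_low_rank_mat_le:
  fixes m n s :: nat
  assumes q: "CARD('a::{finite, field}) \<ge> 2" and "s < m" and "s < n"
  shows "real (card {M :: 'a mat. M \<in> carrier_mat m n \<and> mat_rank M \<le> s})
     \<le> 32/7 * real CARD('a) ^ (m * s + s * (n - s))"
proof -
  define Q where "Q = real CARD('a)"
  have Q: "Q \<ge> 2" using q unfolding Q_def by simp
  have "card {M :: 'a mat. M \<in> carrier_mat m n \<and> mat_rank M \<le> s}
      \<le> card (\<Union>\<rho>\<le>s. (\<lambda>ds. mat_of_cols m (decode_cols m [] ds)) ` (col_codes m 0 n \<rho> :: 'a col_code list set))"
    by (rule card_mono[OF _ low_rank_mat_subset_decode]) (simp add: finite_col_codes)
  also have "\<dots> \<le> (\<Sum>\<rho>\<le>s. card (col_codes m 0 n \<rho> :: 'a col_code list set))"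
    by (intro card_UN_le[THEN order_trans] sum_mono card_image_le finite_col_codes) simp
  finally have "real (card {M :: 'a mat. M \<in> carrier_mat m n \<and> mat_rank M \<le> s})
      \<le> (\<Sum>\<rho>\<le>s. real (card (col_codes m 0 n \<rho> :: 'a col_code list set)))"
    by (metis of_nat_le_iff of_nat_sum)
  also have "\<dots> \<le> (\<Sum>\<rho>\<le>s. 4 * Q ^ (m * \<rho> + \<rho> * (n - \<rho>)))"
  proof (rule sum_mono)
    fix \<rho> assume "\<rho> \<in> {..s}"
    then have "real (card (col_codes m 0 n \<rho> :: 'a col_code list set)) \<le> col_code_bound Q m 0 n \<rho>"
      using card_col_codes_le[OF q, of \<rho> n m 0] \<open>s < n\<close> unfolding Q_def by simp
    also have "\<dots> \<le> 4 * Q ^ (m * \<rho> + \<rho> * (n - \<rho>))"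
      unfolding col_code_bound_def using qpoch_inv_le_4[OF Q, of \<rho>] Q by simp
    finally show "real (card (col_codes m 0 n \<rho> :: 'a col_code list set)) \<le> 4 * Q ^ (m * \<rho> + \<rho> * (n - \<rho>))" .
  qed
  also have "\<dots> \<le> 4 * (8/7 * Q ^ (m * s + s * (n - s)))"
    using sum_power_rank_exponent_le[OF Q assms(2,3)] by (simp add: sum_distrib_left[symmetric])
  finally show ?thesis unfolding Q_def by simp
qed

lemma card_carrier_mat: "card (carrier_mat a b :: 'a::finite mat set) = CARD('a) ^ (a * b)"
  and finite_carrier_mat: "finite (carrier_mat a b :: 'a::finite mat set)"
proof -
  let ?P = "PiE ({..<a} \<times> {..<b}) (\<lambda>_. UNIV :: 'a set)"
  let ?f = "\<lambda>g. mat a b g :: 'a mat"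
  have bij: "bij_betw ?f ?P (carrier_mat a b)"
  proof (rule bij_betw_byWitness[where f' = "\<lambda>M. restrict (\<lambda>ij. M $$ ij) ({..<a} \<times> {..<b})"])
    show "\<forall>g \<in> ?P. restrict (\<lambda>ij. ?f g $$ ij) ({..<a} \<times> {..<b}) = g"
    proof
      fix g assume g: "g \<in> ?P"
      show "restrict (\<lambda>ij. ?f g $$ ij) ({..<a} \<times> {..<b}) = g"
      proof
        fix ij show "restrict (\<lambda>ij. ?f g $$ ij) ({..<a} \<times> {..<b}) ij = g ij"
          using PiE_arb[OF g, of ij] by (cases ij) auto
      qed
    qed
    show "\<forall>M \<in> carrier_mat a b. ?f (restrict (\<lambda>ij. M $$ ij) ({..<a} \<times> {..<b})) = M"
      by (auto intro!: eq_matI)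
    show "(\<lambda>M. restrict (\<lambda>ij. M $$ ij) ({..<a} \<times> {..<b})) ` carrier_mat a b \<subseteq> ?P"
      by (intro image_subsetI) simp
  qed auto
  have "finite ?P" by (intro finite_PiE) auto
  then show "finite (carrier_mat a b :: 'a mat set)" using bij_betw_finite[OF bij] by simp
  show "card (carrier_mat a b :: 'a mat set) = CARD('a) ^ (a * b)"
    using bij_betw_same_card[OF bij] by (simp add: card_PiE card_cartesian_product)
qed

lemma PiE_merge:
  fixes X :: "'i \<Rightarrow> 'x set"
  assumes B: "B \<in> PiE S X" and C: "C \<in> PiE D X" and "S \<inter> D = {}"
  shows "(\<lambda>i. if i \<in> S then B i else C i) \<in> PiE (S \<union> D) X"
    and "restrict (\<lambda>i. if i \<in> S then B i else C i) S = B"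
    and "restrict (\<lambda>i. if i \<in> S then B i else C i) D = C"
proof -
  show "(\<lambda>i. if i \<in> S then B i else C i) \<in> PiE (S \<union> D) X"
    unfolding PiE_iff using B C PiE_arb[OF C] by (auto dest: PiE_mem simp: extensional_def)
  show "restrict (\<lambda>i. if i \<in> S then B i else C i) S = B"
    using PiE_arb[OF B] by (auto intro!: ext)
  show "restrict (\<lambda>i. if i \<in> S then B i else C i) D = C"
    using PiE_arb[OF C] assms(3) by (auto intro!: ext)
qed

lemma card_PiE_filter_restrict:
  fixes X :: "'i \<Rightarrow> 'x set"
  assumes "S \<inter> D = {}"
  shows "card {A \<in> PiE (S \<union> D) X. P (restrict A S)} = card {B \<in> PiE S X. P B} * card (PiE D X)"
proof -
  let ?merge = "\<lambda>(B, C) i. if i \<in> S then B i else C i :: 'x"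
  have "bij_betw (\<lambda>A. (restrict A S, restrict A D)) {A \<in> PiE (S \<union> D) X. P (restrict A S)}
      ({B \<in> PiE S X. P B} \<times> PiE D X)"
  proof (rule bij_betw_byWitness[where f' = ?merge])
    show "\<forall>A \<in> {A \<in> PiE (S \<union> D) X. P (restrict A S)}. ?merge (restrict A S, restrict A D) = A"
    proof (intro ballI ext)
      fix A i assume "A \<in> {A \<in> PiE (S \<union> D) X. P (restrict A S)}"
      then show "?merge (restrict A S, restrict A D) i = A i" using PiE_arb[of A "S \<union> D" X i] by auto
    qed
    show "\<forall>BC \<in> {B \<in> PiE S X. P B} \<times> PiE D X. (restrict (?merge BC) S, restrict (?merge BC) D) = BC"
      using PiE_merge(2,3)[OF _ _ assms] by auto
    show "(\<lambda>A. (restrict A S, restrict A D)) ` {A \<in> PiE (S \<union> D) X. P (restrict A S)}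
        \<subseteq> {B \<in> PiE S X. P B} \<times> PiE D X"
    proof (rule image_subsetI)
      fix A assume A: "A \<in> {A \<in> PiE (S \<union> D) X. P (restrict A S)}"
      then have "\<forall>i \<in> S \<union> D. A i \<in> X i" by (blast dest: PiE_mem)
      then show "(restrict A S, restrict A D) \<in> {B \<in> PiE S X. P B} \<times> PiE D X"
        using A by (simp add: restrict_PiE_iff)
    qed
    show "?merge ` ({B \<in> PiE S X. P B} \<times> PiE D X) \<subseteq> {A \<in> PiE (S \<union> D) X. P (restrict A S)}"
    proof
      fix A assume "A \<in> ?merge ` ({B \<in> PiE S X. P B} \<times> PiE D X)"
      then obtain B C where "A = ?merge (B, C)" "B \<in> PiE S X" "P B" "C \<in> PiE D X" by auto
      then show "A \<in> {A \<in> PiE (S \<union> D) X. P (restrict A S)}" using PiE_merge[OF _ _ assms, of B X C] by simp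
    qed
  qed
  then show ?thesis by (simp add: bij_betw_same_card card_cartesian_product)
qed

lemma exists_below_average_incidence:
  assumes "finite T" and "T \<noteq> {}" and "finite Ss"
    and B: "\<And>S. S \<in> Ss \<Longrightarrow> real (card {A \<in> T. P A S}) \<le> B"
  shows "\<exists>A \<in> T. real (card {S \<in> Ss. P A S}) * real (card T) \<le> real (card Ss) * B"
proof (rule ccontr)
  assume "\<not> ?thesis"
  then have "(\<Sum>A\<in>T. real (card Ss) * B / real (card T)) < (\<Sum>A\<in>T. real (card {S \<in> Ss. P A S}))"
    using assms(1,2) by (intro sum_strict_mono) (auto simp: card_gt_0_iff pos_divide_less_eq)
  also have "\<dots> = (\<Sum>S\<in>Ss. real (card {A \<in> T. P A S}))"
    using sum.swap_restrict[OF assms(1,3), of "\<lambda>_ _. 1 :: real" P] by simp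
  also have "\<dots> \<le> real (card Ss) * B" using sum_mono[of Ss _ "\<lambda>_. B"] B by simp
  finally show False using assms(1,2) by simp
qed

lemma stack_mat_carrier: "stack_mat k n A l \<in> carrier_mat (length l * k) n"
  unfolding stack_mat_def by simp

lemma stack_mat_comp: "stack_mat k n (\<lambda>i. A (g i)) l = stack_mat k n A (map g l)"
  unfolding stack_mat_def by (intro eq_matI) (auto simp: less_mult_imp_div_less)

lemma stack_mat_restrict:
  assumes "set l \<subseteq> S"
  shows "stack_mat k n (restrict A S) l = stack_mat k n A l"
proof -
  have "l ! (i div k) \<in> S" if "i < length l * k" for i
    using assms nth_mem[OF less_mult_imp_div_less[OF that]] by blast
  then show ?thesis unfolding stack_mat_def by (intro eq_matI) auto
qed

lemma inj_on_stack_mat: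
  assumes "k > 0" and "finite S"
  shows "inj_on (\<lambda>B. stack_mat k n B (sorted_list_of_set S)) (PiE S (\<lambda>_. carrier_mat k n))"
proof (rule inj_onI)
  fix B B' assume B: "B \<in> PiE S (\<lambda>_. carrier_mat k n)" and B': "B' \<in> PiE S (\<lambda>_. carrier_mat k n)"
    and eq: "stack_mat k n B (sorted_list_of_set S) = stack_mat k n B' (sorted_list_of_set S)"
  let ?l = "sorted_list_of_set S"
  show "B = B'"
  proof (rule PiE_ext[OF B B'])
    fix i assume "i \<in> S"
    then obtain p where p: "p < length ?l" "?l ! p = i"
      using assms(2) by (metis in_set_conv_nth set_sorted_list_of_set)
    have Bi: "B i \<in> carrier_mat k n" "B' i \<in> carrier_mat k n" using B B' \<open>i \<in> S\<close> by auto
    show "B i = B' i"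
    proof (rule eq_matI)
      fix a b assume "a < dim_row (B' i)" "b < dim_col (B' i)"
      then have ab: "a < k" "b < n" using Bi by auto
      have "p * k + a < Suc p * k" using ab by simp
      also have "\<dots> \<le> length ?l * k" using p(1) by (intro mult_right_mono) auto
      finally have "p * k + a < length ?l * k" .
      moreover have "(p * k + a) div k = p" "(p * k + a) mod k = a" using ab assms(1) by auto
      ultimately show "B i $$ (a, b) = B' i $$ (a, b)"
        using arg_cong[OF eq, of "\<lambda>M. M $$ (p * k + a, b)"] ab p unfolding stack_mat_def by simp
    qed (use Bi in auto)
  qed
qed

lemma sorted_list_of_set_image_strict_mono:
  assumes "strict_mono_on S g" and "finite S"
  shows "sorted_list_of_set (g ` S) = map g (sorted_list_of_set S)"
proof -
  have "sorted_wrt (<) (sorted_list_of_set S)" by (rule strict_sorted_list_of_set)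
  then have "sorted_wrt (<) (map g (sorted_list_of_set S))"
    using assms unfolding sorted_wrt_map
    by (elim sorted_wrt_mono_rel[rotated]) (auto simp: strict_mono_on_def)
  moreover have "inj_on g S" using assms(1) strict_mono_on_imp_inj_on by blast
  ultimately show ?thesis
    using sorted_list_of_set_unique[of "g ` S" "map g (sorted_list_of_set S)"] assms(2)
    by (simp add: card_image)
qed

lemma card_deficient_families_le:
  fixes k n :: nat and P :: "'a::finite mat \<Rightarrow> bool"
  assumes "finite I" and "S \<subseteq> I" and "card S = \<alpha>" and "0 < k"
  shows "card {A \<in> PiE I (\<lambda>_. carrier_mat k n). P (stack_mat k n A (sorted_list_of_set S))}
    \<le> card {M \<in> carrier_mat (\<alpha> * k) n. P M} * card (carrier_mat k n :: 'a mat set) ^ (card I - \<alpha>)"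
proof -
  let ?X = "carrier_mat k n :: 'a mat set"
  let ?st = "\<lambda>B. stack_mat k n B (sorted_list_of_set S)"
  have fS: "finite S" using assms(1,2) finite_subset by blast
  have "{A \<in> PiE I (\<lambda>_. ?X). P (?st A)} = {A \<in> PiE (S \<union> (I - S)) (\<lambda>_. ?X). P (?st (restrict A S))}"
    using assms(2) fS by (simp add: Un_absorb1 stack_mat_restrict)
  then have "card {A \<in> PiE I (\<lambda>_. ?X). P (?st A)} = card {B \<in> PiE S (\<lambda>_. ?X). P (?st B)} * card ?X ^ (card I - \<alpha>)"
    using card_PiE_filter_restrict[of S "I - S" "\<lambda>_. ?X" "\<lambda>B. P (?st B)"] assms fS
    by (simp add: card_PiE card_Diff_subset)
  also have "card {B \<in> PiE S (\<lambda>_. ?X). P (?st B)} \<le> card {M \<in> carrier_mat (\<alpha> * k) n. P M}"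
  proof (rule card_inj_on_le)
    show "inj_on ?st {B \<in> PiE S (\<lambda>_. ?X). P (?st B)}"
      using inj_on_stack_mat[OF assms(4) fS, of n] by (rule inj_on_subset) auto
    show "?st ` {B \<in> PiE S (\<lambda>_. ?X). P (?st B)} \<subseteq> {M \<in> carrier_mat (\<alpha> * k) n. P M}"
      using stack_mat_carrier[of k n _ "sorted_list_of_set S"] fS assms(3) by (auto simp: mult.commute)
  qed (simp add: finite_carrier_mat)
  finally show ?thesis by simp
qed

lemma exists_family_deficient_count_le:
  fixes k n s R \<alpha> :: nat
  assumes k: "0 < k" and "\<alpha> \<le> R"
  shows "\<exists>A \<in> PiE {1..R} (\<lambda>_. carrier_mat k n :: 'a::{finite, field} mat set).
    real (card {S. S \<subseteq> {1..R} \<and> card S = \<alpha> \<and> mat_rank (stack_mat k n A (sorted_list_of_set S)) \<le> s})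
      * real (card (carrier_mat k n :: 'a mat set)) ^ \<alpha>
    \<le> real (R choose \<alpha>) * real (card {M \<in> carrier_mat (\<alpha> * k) n :: 'a mat set. mat_rank M \<le> s})"
proof -
  define X where "X = (carrier_mat k n :: 'a mat set)"
  define T where "T = PiE {1..R} (\<lambda>_. X)"
  define Ss where "Ss = {S. S \<subseteq> {1..R} \<and> card S = \<alpha>}"
  define deficient where "deficient A S \<longleftrightarrow> mat_rank (stack_mat k n A (sorted_list_of_set S)) \<le> s"
    for A :: "nat \<Rightarrow> 'a mat" and S :: "nat set"
  define Y where "Y = real (card X) ^ (R - \<alpha>)"
  define B where "B = real (card {M \<in> carrier_mat (\<alpha> * k) n :: 'a mat set. mat_rank M \<le> s}) * Y"
  have "\<exists>A \<in> T. real (card {S \<in> Ss. deficient A S}) * real (card T) \<le> real (card Ss) * B"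
  proof (rule exists_below_average_incidence)
    show "finite T" unfolding T_def X_def by (intro finite_PiE finite_carrier_mat) simp
    show "T \<noteq> {}" unfolding T_def X_def by (auto simp: PiE_eq_empty_iff)
    show "finite Ss" unfolding Ss_def by simp
    fix S assume "S \<in> Ss"
    then have "card {A \<in> T. deficient A S}
        \<le> card {M \<in> carrier_mat (\<alpha> * k) n :: 'a mat set. mat_rank M \<le> s} * card X ^ (card {1..R} - \<alpha>)"
      unfolding T_def X_def deficient_def Ss_def using k by (intro card_deficient_families_le) simp_all
    then show "real (card {A \<in> T. deficient A S}) \<le> B"
      unfolding B_def Y_def
      by (simp only: of_nat_power[symmetric] of_nat_mult[symmetric] of_nat_le_iff card_atLeastAtMost diff_Suc_1)
  qed
  then obtain A where A: "A \<in> T"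
    and count: "real (card {S \<in> Ss. deficient A S}) * real (card T) \<le> real (card Ss) * B" by blast
  have "real (card T) = real (card X) ^ \<alpha> * Y"
    using \<open>\<alpha> \<le> R\<close> unfolding T_def Y_def by (simp add: card_PiE power_add[symmetric])
  moreover have "Y > 0" unfolding Y_def X_def using card_carrier_mat[of k n, where 'a = 'a] by simp
  ultimately have "real (card {S \<in> Ss. deficient A S}) * real (card X) ^ \<alpha>
      \<le> real (R choose \<alpha>) * real (card {M \<in> carrier_mat (\<alpha> * k) n :: 'a mat set. mat_rank M \<le> s})"
    using count unfolding B_def Ss_def by (simp add: n_subsets mult.assoc[symmetric])
  then show ?thesis using A unfolding T_def X_def Ss_def deficient_def by (auto simp: conj_assoc)
qed

lemma exists_family_few_deficient:
  fixes k n s R \<alpha> d :: nat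
  assumes q: "CARD('a::{finite, field}) \<ge> 2" and k: "0 < k" and s: "s < \<alpha> * k" "s < n"
    and "\<alpha> \<le> R"
    and budget: "real (R choose \<alpha>) * (32/7) \<le> real d * real CARD('a) ^ ((\<alpha> * k - s) * (n - s))"
  shows "\<exists>A \<in> PiE {1..R} (\<lambda>_. carrier_mat k n :: 'a mat set).
    card {S. S \<subseteq> {1..R} \<and> card S = \<alpha> \<and> mat_rank (stack_mat k n A (sorted_list_of_set S)) \<le> s} \<le> d"
proof -
  define Q where "Q = real CARD('a)"
  define E where "E = \<alpha> * k * s + s * (n - s)"
  define F where "F = (\<alpha> * k - s) * (n - s)"
  obtain A where A: "A \<in> PiE {1..R} (\<lambda>_. carrier_mat k n :: 'a mat set)"
    and count: "real (card {S. S \<subseteq> {1..R} \<and> card S = \<alpha> \<and> mat_rank (stack_mat k n A (sorted_list_of_set S)) \<le> s})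
      * real (card (carrier_mat k n :: 'a mat set)) ^ \<alpha>
      \<le> real (R choose \<alpha>) * real (card {M \<in> carrier_mat (\<alpha> * k) n :: 'a mat set. mat_rank M \<le> s})"
    using exists_family_deficient_count_le[OF k \<open>\<alpha> \<le> R\<close>] by blast
  let ?c = "real (card {S. S \<subseteq> {1..R} \<and> card S = \<alpha> \<and> mat_rank (stack_mat k n A (sorted_list_of_set S)) \<le> s})"
  have Q: "Q \<ge> 2" using q unfolding Q_def by simp
  obtain u v where uv: "\<alpha> * k = s + u" "n = s + v"
    using less_imp_add_positive[OF s(1)] less_imp_add_positive[OF s(2)] by metis
  have "\<alpha> * k * n = E + F" unfolding E_def F_def uv by (simp add: algebra_simps)
  then have "real (card (carrier_mat k n :: 'a mat set)) ^ \<alpha> = Q ^ F * Q ^ E"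
    unfolding Q_def card_carrier_mat by (simp add: power_mult[symmetric] power_add[symmetric] ac_simps)
  then have "?c * (Q ^ F * Q ^ E) \<le> real (R choose \<alpha>) * real (card {M \<in> carrier_mat (\<alpha> * k) n :: 'a mat set. mat_rank M \<le> s})"
    using count by simp
  also have "\<dots> \<le> real (R choose \<alpha>) * (32/7) * Q ^ E"
    using mult_left_mono[OF card_low_rank_mat_le[OF q s], of "real (R choose \<alpha>)"]
    unfolding Q_def E_def by (simp add: mult_ac)
  finally have "?c * Q ^ F \<le> real (R choose \<alpha>) * (32/7)"
    using Q by (simp add: mult.assoc[symmetric])
  also have "\<dots> \<le> real d * Q ^ F" using budget unfolding Q_def F_def .
  finally show ?thesis using A Q by (auto simp: mult_le_cancel_right_pos)
qed

lemma exists_strict_mono_into: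
  fixes J :: "'a::linorder set"
  assumes "finite J" and "r \<le> card J"
  shows "\<exists>g. strict_mono_on {1..r} g \<and> g ` {1..r} \<subseteq> J"
proof -
  define L where "L = sorted_list_of_set J"
  have len: "r \<le> length L" and setL: "set L = J" and sorted: "sorted_wrt (<) L"
    using assms unfolding L_def by simp_all
  have "strict_mono_on {1..r} (\<lambda>i. L ! (i - 1))"
  proof (rule strict_mono_onI)
    fix i j assume "i \<in> {1..r}" "j \<in> {1..r}" "i < j"
    then have "i - 1 < j - 1" "j - 1 < length L" using len by auto
    then show "L ! (i - 1) < L ! (j - 1)" using sorted by (simp add: sorted_wrt_nth_less)
  qed
  moreover have "(\<lambda>i. L ! (i - 1)) ` {1..r} \<subseteq> J"
    using len setL by auto
  ultimately show ?thesis by blast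
qed

lemma exists_family_full_rank:
  fixes k n s r d \<alpha> :: nat
  assumes q: "CARD('a::{finite, field}) \<ge> 2" and k: "0 < k" and s: "s < \<alpha> * k" "s < n"
    and \<alpha>: "0 < \<alpha>" "\<alpha> \<le> r + d"
    and budget: "real ((r + d) choose \<alpha>) * (32/7) \<le> real d * real CARD('a) ^ ((\<alpha> * k - s) * (n - s))"
  shows "\<exists>A :: nat \<Rightarrow> 'a mat. (\<forall>i \<in> {1..r}. A i \<in> carrier_mat k n) \<and>
           (\<forall>S. S \<subseteq> {1..r} \<and> card S = \<alpha> \<longrightarrow> s < mat_rank (stack_mat k n A (sorted_list_of_set S)))"
proof -
  obtain A :: "nat \<Rightarrow> 'a mat" where A: "A \<in> PiE {1..r + d} (\<lambda>_. carrier_mat k n)"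
    and few: "card {S. S \<subseteq> {1..r + d} \<and> card S = \<alpha> \<and> mat_rank (stack_mat k n A (sorted_list_of_set S)) \<le> s} \<le> d"
    using exists_family_few_deficient[OF q k s \<alpha>(2) budget] by blast
  define Bad where "Bad = {S. S \<subseteq> {1..r + d} \<and> card S = \<alpha> \<and> mat_rank (stack_mat k n A (sorted_list_of_set S)) \<le> s}"
  have "finite Bad" unfolding Bad_def by (rule finite_subset[of _ "Pow {1..r + d}"]) auto
  then have "card {1..r + d} - card (Min ` Bad) \<le> card ({1..r + d} - Min ` Bad)"
    by (intro diff_card_le_card_Diff) simp
  moreover have "card (Min ` Bad) \<le> d"
    using card_image_le[OF \<open>finite Bad\<close>, of Min] few unfolding Bad_def by linarith
  ultimately have "r \<le> card ({1..r + d} - Min ` Bad)" by simp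
  then obtain g where g: "strict_mono_on {1..r} g" "g ` {1..r} \<subseteq> {1..r + d} - Min ` Bad"
    using exists_strict_mono_into[of "{1..r + d} - Min ` Bad" r] by blast
  show ?thesis
  proof (intro exI[of _ "\<lambda>i. A (g i)"] conjI ballI allI impI)
    fix i assume "i \<in> {1..r}"
    then have "g i \<in> {1..r + d}" using g(2) by blast
    then show "A (g i) \<in> carrier_mat k n" using A by blast
  next
    fix S assume S: "S \<subseteq> {1..r} \<and> card S = \<alpha>"
    then have fS: "finite S" and "S \<noteq> {}" using \<alpha>(1) finite_subset by auto
    have gS: "strict_mono_on S g" using g(1) S by (auto intro: strict_mono_onI dest: strict_mono_onD)
    have stack: "stack_mat k n (\<lambda>i. A (g i)) (sorted_list_of_set S) = stack_mat k n A (sorted_list_of_set (g ` S))"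
      unfolding stack_mat_comp sorted_list_of_set_image_strict_mono[OF gS fS] ..
    have "Min (g ` S) \<in> g ` S" using fS \<open>S \<noteq> {}\<close> by simp
    then have "g ` S \<notin> Bad" using g(2) S by blast
    moreover have "g ` S \<subseteq> {1..r + d}" "card (g ` S) = \<alpha>"
      using g(2) S card_image[OF strict_mono_on_imp_inj_on[OF gS]] by auto
    ultimately show "s < mat_rank (stack_mat k n (\<lambda>i. A (g i)) (sorted_list_of_set S))"
      unfolding stack Bad_def by simp
  qed
qed

lemma power_one_plus_div_le_exp:
  fixes x :: real
  assumes "0 \<le> x"
  shows "(1 + x / real n) ^ n \<le> exp x"
proof (cases "n = 0")
  case False
  have "(1 + x / real n) ^ n \<le> exp (x / real n) ^ n"
    using assms by (intro power_mono exp_ge_add_one_self) simp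
  also have "\<dots> = exp x" using False by (simp add: exp_of_nat_mult[symmetric])
  finally show ?thesis .
qed (use assms in simp)

lemma div_ceiling_mult_bounds:
  fixes r \<alpha> :: nat
  assumes "0 < \<alpha>" and "\<alpha> \<le> r"
  shows "r \<le> (r + \<alpha> - 1) div \<alpha> * \<alpha>" and "(r + \<alpha> - 1) div \<alpha> * \<alpha> \<le> 2 * r"
proof -
  have "(r + \<alpha> - 1) div \<alpha> * \<alpha> + (r + \<alpha> - 1) mod \<alpha> = r + \<alpha> - 1" by (rule div_mult_mod_eq)
  moreover have "(r + \<alpha> - 1) mod \<alpha> < \<alpha>" using assms(1) by simp
  ultimately show "r \<le> (r + \<alpha> - 1) div \<alpha> * \<alpha>" "(r + \<alpha> - 1) div \<alpha> * \<alpha> \<le> 2 * r"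
    using assms by linarith+
qed

lemma choose_add_div_ceiling_le:
  fixes r \<alpha> :: nat
  assumes "0 < \<alpha>" and "\<alpha> \<le> r"
  shows "real ((r + (r + \<alpha> - 1) div \<alpha>) choose \<alpha>) * fact \<alpha> \<le> real r ^ \<alpha> * exp 2"
proof -
  define d where "d = (r + \<alpha> - 1) div \<alpha>"
  have "real (d * \<alpha>) \<le> real (2 * r)"
    using div_ceiling_mult_bounds(2)[OF assms, folded d_def] by (simp only: of_nat_le_iff)
  then have rd: "real (r + d) \<le> real r * (1 + 2 / real \<alpha>)" using assms(1) by (simp add: field_simps)
  have "real (((r + d) choose \<alpha>) * fact \<alpha>) \<le> real ((r + d) ^ \<alpha>)"
    using binomial_fact_pow[of "r + d" \<alpha>] by (simp only: of_nat_le_iff)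
  then have "real ((r + d) choose \<alpha>) * fact \<alpha> \<le> real (r + d) ^ \<alpha>" by simp
  also have "\<dots> \<le> (real r * (1 + 2 / real \<alpha>)) ^ \<alpha>"
    using rd by (rule power_mono) simp
  also have "\<dots> = real r ^ \<alpha> * (1 + 2 / real \<alpha>) ^ \<alpha>" by (rule power_mult_distrib)
  also have "\<dots> \<le> real r ^ \<alpha> * exp 2"
    using power_one_plus_div_le_exp[of 2 \<alpha>] by (intro mult_left_mono) simp_all
  finally show ?thesis unfolding d_def .
qed

lemma choose_alteration_budget:
  fixes \<alpha> r :: nat and Z :: real
  assumes \<alpha>: "\<alpha> \<ge> 2" "\<alpha> \<le> r" and Z: "Z \<ge> 0"
    and H: "real r ^ (\<alpha> - 1) * (2 * exp 1 * 3.48 * real \<alpha>) \<le> fact (\<alpha> - 1) * Z"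
  shows "real ((r + (r + \<alpha> - 1) div \<alpha>) choose \<alpha>) * (32/7) \<le> real ((r + \<alpha> - 1) div \<alpha>) * Z"
proof -
  define d where "d = (r + \<alpha> - 1) div \<alpha>"
  define e where "e = exp (1::real)"
  obtain a where a: "\<alpha> = Suc a" using \<alpha> by (cases \<alpha>) auto
  have e: "0 < e" "e < 2.72" unfolding e_def using e_less_272 by auto
  have apos: "real \<alpha> > 0" using \<alpha> by simp
  have "exp (2::real) = e * e" unfolding e_def by (simp flip: exp_add)
  then have "real ((r + d) choose \<alpha>) * (32/7) * (real \<alpha> * fact a) \<le> 32/7 * (real r * (real r ^ a * (e * e)))"
    using choose_add_div_ceiling_le[of \<alpha> r, folded d_def] \<alpha> unfolding a by (simp add: mult_ac)
  also have "\<dots> \<le> 32/7 * (real r * (fact a * Z / (2 * e * 3.48 * real \<alpha>) * (e * e)))"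
    using H e apos unfolding a e_def by (intro mult_left_mono mult_right_mono) (simp_all add: pos_le_divide_eq)
  also have "\<dots> = real r * Z * fact a * (e * (32/7) / (6.96 * real \<alpha>))"
    using e apos by (simp add: field_simps)
  also have "\<dots> \<le> real r * Z * fact a * 1"
    using e \<alpha> Z by (intro mult_left_mono) (simp_all add: field_simps)
  also have "\<dots> \<le> real d * Z * (real \<alpha> * fact a)"
    using mult_right_mono[OF div_ceiling_mult_bounds(1)[of \<alpha> r, folded d_def, THEN of_nat_mono], of "Z * fact a"] Z \<alpha>
    by (simp add: mult_ac)
  finally show ?thesis unfolding d_def[symmetric] using apos by (simp add: mult_le_cancel_right_pos)
qed

lemma power_le_of_le_powr_root:
  fixes x c Q y :: real and j :: nat
  assumes "0 \<le> x" "0 < c" "0 < Q" "0 < j"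
    and "x \<le> c powr (1 / real j) * Q powr (y / real j)"
  shows "x ^ j \<le> c * Q powr y"
proof -
  have "x ^ j \<le> (c powr (1 / real j) * Q powr (y / real j)) ^ j"
    using assms(1,5) by (intro power_mono)
  also have "\<dots> = c * Q powr y"
    using assms(2-4) by (simp add: power_mult_distrib powr_power)
  finally show ?thesis .
qed

lemma deficiency_exponent_eq:
  fixes \<alpha> l \<epsilon> h t :: nat
  assumes "\<epsilon> < h" and "h \<le> \<alpha> * l + \<epsilon>" and "1 \<le> t"
  shows "real ((\<alpha> * (l * t) - ((h - \<epsilon>) * t - 1)) * (h * t - ((h - \<epsilon>) * t - 1)))
    = real (\<alpha> * l + \<epsilon> - h) * real \<epsilon> * real t ^ 2 + real (\<alpha> * l + 2 * \<epsilon> - h) * real t + 1"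
proof -
  define w where "w = h - \<epsilon>"
  define a where "a = \<alpha> * l + \<epsilon> - h"
  have h: "h = \<epsilon> + w" and l: "\<alpha> * l = a + w" and "w \<ge> 1"
    using assms(1,2) unfolding w_def a_def by simp_all
  then have "(h - \<epsilon>) * t - 1 = w * t - 1" "w * t \<ge> 1" using assms(3) by simp_all
  moreover have "\<alpha> * (l * t) = a * t + w * t" "h * t = \<epsilon> * t + w * t"
    unfolding h mult.assoc[symmetric] l by (simp_all add: algebra_simps)
  ultimately have "\<alpha> * (l * t) - ((h - \<epsilon>) * t - 1) = a * t + 1" "h * t - ((h - \<epsilon>) * t - 1) = \<epsilon> * t + 1"
    by simp_all
  moreover have "\<alpha> * l + \<epsilon> - h = a" "\<alpha> * l + 2 * \<epsilon> - h = a + \<epsilon>" using h l by simp_all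
  ultimately show ?thesis by (simp add: algebra_simps power2_eq_square)
qed

theorem mainTheorem15:
  fixes \<alpha> \<epsilon> l t h r q :: nat
  assumes "\<alpha> \<ge> 2" and "l \<ge> 1" and "t \<ge> 1"
    and "1 \<le> h" and "h \<le> \<alpha> * l + \<epsilon>"
    and "CARD('a) = q"
    and "real r \<le> ((fact (\<alpha> - 1) / (2 * exp 1 * 3.48 * real \<alpha>)) powr (1 / (real \<alpha> - 1)))
                  * real q powr ((real (\<alpha> * l + \<epsilon> - h) * real \<epsilon> * real t ^ 2
                                 + real (\<alpha> * l + 2 * \<epsilon> - h) * real t + 1) / (real \<alpha> - 1))"
  shows "\<exists>A :: nat \<Rightarrow> ('a::{finite, field}) mat.
           (\<forall>i \<in> {1..r}. A i \<in> carrier_mat (l * t) (h * t)) \<and>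
           (\<forall>S. S \<subseteq> {1..r} \<and> card S = \<alpha> \<longrightarrow>
              int (mat_rank (stack_mat (l * t) (h * t) A (sorted_list_of_set S)))
                \<ge> (int h - int \<epsilon>) * int t)"
proof (cases "\<epsilon> < h \<and> \<alpha> \<le> r")
  case False
  then have "(int h - int \<epsilon>) * int t \<le> 0 \<or> (\<forall>S. S \<subseteq> {1..r} \<longrightarrow> card S \<noteq> \<alpha>)"
    using card_mono[of "{1..r}"] by (force simp: mult_nonpos_nonneg)
  then show ?thesis by (intro exI[of _ "\<lambda>_. 0\<^sub>m (l * t) (h * t)"]) auto
next
  case True
  define s where "s = (h - \<epsilon>) * t - 1"
  define d where "d = (r + \<alpha> - 1) div \<alpha>"
  define F where "F = (\<alpha> * (l * t) - s) * (h * t - s)"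
  have q: "CARD('a) \<ge> 2" using card_mono[of UNIV "{0, 1 :: 'a}"] by simp
  have "real F = real (\<alpha> * l + \<epsilon> - h) * real \<epsilon> * real t ^ 2 + real (\<alpha> * l + 2 * \<epsilon> - h) * real t + 1"
    unfolding F_def s_def using True assms(3,5) by (intro deficiency_exponent_eq) simp_all
  moreover have "real \<alpha> - 1 = real (\<alpha> - 1)" using assms(1) by simp
  ultimately have "real r ^ (\<alpha> - 1) \<le> fact (\<alpha> - 1) / (2 * exp 1 * 3.48 * real \<alpha>) * real q powr real F"
    using assms(1,6,7) q by (intro power_le_of_le_powr_root) simp_all
  then have budget: "real ((r + d) choose \<alpha>) * (32/7) \<le> real d * real CARD('a) ^ F"
    using choose_alteration_budget[OF assms(1) conjunct2[OF True], of "real q ^ F"] assms(1,6) q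
    unfolding d_def by (simp add: powr_realpow field_simps)
  have "1 \<le> (h - \<epsilon>) * t" "(h - \<epsilon>) * t \<le> \<alpha> * (l * t)" "(h - \<epsilon>) * t \<le> h * t"
    using True assms(3,5) by (auto simp: mult.assoc[symmetric])
  then have "s < \<alpha> * (l * t)" "s < h * t" unfolding s_def by linarith+
  moreover have "0 < l * t" "0 < \<alpha>" "\<alpha> \<le> r + d" using True assms(1-3) by auto
  ultimately obtain A :: "nat \<Rightarrow> 'a mat" where "\<forall>i \<in> {1..r}. A i \<in> carrier_mat (l * t) (h * t)"
    and "\<forall>S. S \<subseteq> {1..r} \<and> card S = \<alpha> \<longrightarrow> s < mat_rank (stack_mat (l * t) (h * t) A (sorted_list_of_set S))"
    using exists_family_full_rank[OF q _ _ _ _ _ budget[unfolded F_def]] by blast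
  moreover have "(int h - int \<epsilon>) * int t = int (s + 1)" unfolding s_def using True assms(3) by simp
  ultimately show ?thesis by (intro exI[of _ A]) auto
qed

end
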